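(* Consider a network with a source node $SN$, a destination node $DN$ and a finite set of relay nodes (RNs). Let $S$ be the set of legitimate routes, where a legitimate route is a sequence of nodes starting at $SN$, ending at $DN$, and containing each RN at most once. Let $K\ge 1$ and suppose each route (and each sub-route, i.e. any sequence of consecutive links starting at $SN$) $y$ is assigned a utility vector $\mathbf{f}(y)=[f_1(y),\dots,f_K(y)]$ such that, for every $k\in\{1,\dots,K\}$, $$f_k(y)=\sum_{i=1}^{|y|-1} f_k(y_{i,i+1}),$$ where $|y|$ is the number of nodes of $y$, $y_{i,i+1}$ is the link between its $i$-th and $(i+1)$-st nodes, and every link value is positive: $f_k(y_{i,i+1})>0$ for all $k$, $i$ and all routes $y$. Let $x=\{SN\rightarrow \bar{R}_i\rightarrow DN\}\in S$, where $\bar{R}_i$ denotes the (ordered) sequence of RNs of $x$, and let $x'=\{SN\rightarrow\bar{R}_i\}$ be its sub-route (all links of $x$ except the last hop). Suppose there exists a route $x_d=\{SN\rightarrow\bar{R}_j\rightarrow DN\}\in S$ with $\bar{R}_j\neq\bar{R}_i$ that weakly dominates $x'$, i.e. $\mathbf{f}(x_d)\succeq\mathbf{f}(x')$. Then $x$ cannot generate any Pareto-optimal route: every legitimate route $x_g^{(j)}=\{SN\rightarrow\bar{R}_i\rightarrow R_j\rightarrow DN\}$ obtained from $x$ by inserting a single RN $R_j$ between the last RN of $x$ and $DN$ is not Pareto-optimal.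
   Context: Dominance (all objectives are to be minimized): for utility vectors $\mathbf{f}(a)=[f_1(a),\dots,f_K(a)]$ and $\mathbf{f}(b)$, $a$ strongly dominates $b$, written $\mathbf{f}(a)\succ\mathbf{f}(b)$, iff $f_k(a)<f_k(b)$ for all $k\in\{1,\dots,K\}$; $a$ weakly dominates $b$, written $\mathbf{f}(a)\succeq\mathbf{f}(b)$, iff $f_k(a)\le f_k(b)$ for all $k$ and $f_{k'}(a)<f_{k'}(b)$ for some $k'$. A route $x\in S$ is Pareto-optimal iff there is no route $y\in S$ with $\mathbf{f}(y)\succ\mathbf{f}(x)$. Route generation: a route $x=\{SN\rightarrow\bar{R}_i\rightarrow DN\}$ generates the route $x_g^{(j)}=\{SN\rightarrow\bar{R}_i\rightarrow R_j\rightarrow DN\}$ by inserting a single relay node $R_j$ between the last RN of $x$ and $DN$. *)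

theory Defs
  imports Complex_Main
begin

definition legit_route :: "'a \<Rightarrow> 'a \<Rightarrow> 'a set \<Rightarrow> 'a list \<Rightarrow> bool" where
  "legit_route SN DN R y \<longleftrightarrow>
     length y \<ge> 2 \<and> hd y = SN \<and> last y = DN \<and>
     distinct (butlast (tl y)) \<and> set (butlast (tl y)) \<subseteq> R"

definition route_utility :: "(nat \<Rightarrow> 'a \<Rightarrow> 'a \<Rightarrow> real) \<Rightarrow> nat \<Rightarrow> 'a list \<Rightarrow> real" where
  "route_utility g k y = (\<Sum>i<length y - 1. g k (y ! i) (y ! (i + 1)))"

definition strongly_dominates :: "nat \<Rightarrow> (nat \<Rightarrow> 'r \<Rightarrow> real) \<Rightarrow> 'r \<Rightarrow> 'r \<Rightarrow> bool" where
  "strongly_dominates K f a b \<longleftrightarrow> (\<forall>k\<in>{1..K}. f k a < f k b)"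

definition weakly_dominates :: "nat \<Rightarrow> (nat \<Rightarrow> 'r \<Rightarrow> real) \<Rightarrow> 'r \<Rightarrow> 'r \<Rightarrow> bool" where
  "weakly_dominates K f a b \<longleftrightarrow>
     (\<forall>k\<in>{1..K}. f k a \<le> f k b) \<and> (\<exists>k\<in>{1..K}. f k a < f k b)"

definition pareto_optimal :: "nat \<Rightarrow> (nat \<Rightarrow> 'r \<Rightarrow> real) \<Rightarrow> 'r set \<Rightarrow> 'r \<Rightarrow> bool" where
  "pareto_optimal K f S x \<longleftrightarrow> x \<in> S \<and> \<not> (\<exists>y\<in>S. strongly_dominates K f y x)"

end

theory Submission
  imports Defs
begin

text \<open>Link values are positive, so a route costs strictly more than each of its proper prefixes
in every objective. Hence the route \<open>SN \<rightarrow> R\<^sub>i \<rightarrow> R\<^sub>j \<rightarrow> DN\<close> costs more than its prefix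
\<open>SN \<rightarrow> R\<^sub>i\<close>, which costs at least as much as \<open>x\<^sub>d\<close>; so \<open>x\<^sub>d\<close> strongly dominates it.\<close>

lemma route_utility_less_append:
  assumes "xs \<noteq> []" and "zs \<noteq> []"
    and "\<forall>i<length (xs @ zs) - 1. g k ((xs @ zs) ! i) ((xs @ zs) ! (i + 1)) > 0"
  shows "route_utility g k xs < route_utility g k (xs @ zs)"
proof -
  let ?t = "\<lambda>i. g k ((xs @ zs) ! i) ((xs @ zs) ! (i + 1))"
  let ?n = "length xs - 1" and ?m = "length (xs @ zs) - 1"
  have "?n < ?m" using assms by (cases xs; cases zs) auto
  have "(\<Sum>i\<in>{?n..<?m}. ?t i) > 0"
    using assms \<open>?n < ?m\<close> by (intro sum_pos) auto
  have "route_utility g k xs = (\<Sum>i<?n. ?t i)"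
    unfolding route_utility_def by (rule sum.cong) (auto simp: nth_append)
  also have "\<dots> < (\<Sum>i<?n. ?t i) + (\<Sum>i\<in>{?n..<?m}. ?t i)"
    using \<open>(\<Sum>i\<in>{?n..<?m}. ?t i) > 0\<close> by simp
  also have "\<dots> = route_utility g k (xs @ zs)"
    unfolding route_utility_def lessThan_atLeast0
    using \<open>?n < ?m\<close> by (simp add: sum.atLeastLessThan_concat)
  finally show ?thesis .
qed

lemma strongly_dominates_if_weakly_dominates_less:
  assumes "weakly_dominates K f a b" and "\<forall>k\<in>{1..K}. f k b < f k c"
  shows "strongly_dominates K f a c"
  using assms unfolding weakly_dominates_def strongly_dominates_def by force

theorem proposition1:
  fixes SN DN :: 'a and R :: "'a set" and K :: nat
    and g :: "nat \<Rightarrow> 'a \<Rightarrow> 'a \<Rightarrow> real"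
    and S :: "'a list set"
    and rs rs' :: "'a list"
  assumes fin: "finite R"
    and SN_DN: "SN \<noteq> DN" "SN \<notin> R" "DN \<notin> R"
    and S_def: "S = {y. legit_route SN DN R y}"
    and K: "K \<ge> 1"
    and pos: "\<forall>y\<in>S. \<forall>k\<in>{1..K}. \<forall>i<length y - 1. g k (y ! i) (y ! (i + 1)) > 0"
    and x_in: "SN # rs @ [DN] \<in> S"
    and xd_in: "SN # rs' @ [DN] \<in> S"
    and neq: "rs' \<noteq> rs"
    and dom: "weakly_dominates K (route_utility g) (SN # rs' @ [DN]) (SN # rs)"
  shows "\<forall>r. SN # rs @ [r, DN] \<in> S \<longrightarrow>
           \<not> pareto_optimal K (route_utility g) S (SN # rs @ [r, DN])"
proof (intro allI impI)
  fix r assume xg_in: "SN # rs @ [r, DN] \<in> S"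
  have "\<forall>k\<in>{1..K}. route_utility g k (SN # rs) < route_utility g k ((SN # rs) @ [r, DN])"
    using pos xg_in by (intro ballI route_utility_less_append) auto
  then have "strongly_dominates K (route_utility g) (SN # rs' @ [DN]) (SN # rs @ [r, DN])"
    using strongly_dominates_if_weakly_dominates_less [OF dom] by simp
  then show "\<not> pareto_optimal K (route_utility g) S (SN # rs @ [r, DN])"
    unfolding pareto_optimal_def using xd_in by blast
qed

end
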